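(* Let $g\colon\mathbb X\to\mathbb Y$ be twice continuously differentiable, $D\subset\mathbb Y$ closed, $\Phi(x):=g(x)-D$, $(\bar x,0)\in\operatorname{gph}\Phi$ and $u\in\mathbb S_{\mathbb X}$. If FOSCMS$(u)$ holds, i.e., ($\nabla g(\bar x)u\in\mathcal T_D(g(\bar x))$ and) every $y^*\in\mathcal N_D(g(\bar x);\nabla g(\bar x)u)$ with $\nabla g(\bar x)^*y^*=0$ satisfies $y^*=0$, then all of the following hold: (A) if $\nabla g(\bar x)^*y^*=0$, $\nabla^2\langle y^*,g\rangle(\bar x)(u)+\nabla g(\bar x)^*z^*=0$, $y^*\in\mathcal N_D(g(\bar x);\nabla g(\bar x)u)$, $z^*\in D\mathcal N_D(g(\bar x),y^* )(\nabla g(\bar x)u)$, then $y^*=0$; (B) if $\nabla g(\bar x)u=0$: $\nabla g(\bar x)^*y^*=0$, $\nabla g(\bar x)^*\hat z^*=0$, $y^*\in\mathcal N_D(g(\bar x);\nabla g(\bar x)u)$, $\hat z^*\in D\mathcal N_D(g(\bar x),y^* )(0)$ imply $\hat z^*=0$; if $\nabla g(\bar x)u\ne0$: $\nabla g(\bar x)^*y^*=0$, $\nabla g(\bar x)^*\hat z^*=0$, $y^*\in\mathcal N_D(g(\bar x);\nabla g(\bar x)u)$ imply $\hat z^*\notin D_{\mathrm{sub}}\mathcal N_D(g(\bar x),y^* )(\nabla g(\bar x)u/\|\nabla g(\bar x)u\|)$; (C) for every $x^*\in\mathbb X$, $y^*,z^*\in\mathbb Y$ with $x^*=\nabla^2\langle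 y^*,g\rangle(\bar x)(u)+\nabla g(\bar x)^*z^*$, $y^*\in\mathcal N_D(g(\bar x);\nabla g(\bar x)u)\cap\ker\nabla g(\bar x)^*$, $z^*\in D\mathcal N_D(g(\bar x),y^* )(\nabla g(\bar x)u)$, there is $\lambda\in\mathcal N_D(g(\bar x);\nabla g(\bar x)u)$ (in particular $\lambda\in\mathcal N_D(g(\bar x))$) with $x^*=\nabla g(\bar x)^*\lambda$.
   Context: $\mathcal T_D$ Bouligand tangent cone; $\mathcal N_D(y)$ limiting normal cone; $\mathcal N_D(y;w)$ directional limiting normal cone (limits of $\eta_k\in\widehat{\mathcal N}_D(y+t_kw_k)$ with $w_k\to w$, $t_k\searrow0$, $\widehat{\mathcal N}_D$ the regular normal cone). $D\mathcal N_D(y,y^* )$: graphical derivative of the normal cone map $y\mapsto\mathcal N_D(y)$, i.e. $z^*\in D\mathcal N_D(y,y^* )(q)$ iff $(q,z^* )\in\mathcal T_{\operatorname{gph}\mathcal N_D}(y,y^* )$. Graphical subderivative: for a unit vector $q$, $D_{\mathrm{sub}}\mathcal N_D(y,y^* )(q)$ is the set of unit vectors $w$ such that there are $q_k\to q$, $w_k\to w$, $t_k\searrow0$, $\tau_k\searrow0$, $\tau_k/t_k\to\infty$ with $(y+t_kq_k,y^*+\tau_kw_k)\in\operatorname{gph}\mathcal N_D$. $\nabla^2\langle y^*,g\rangle(\bar x)(u)$ Hessian of $x\mapsto\langle y^*,g(x)\rangle$ applied to $u$. *)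

theory Defs
  imports "HOL-Analysis.Analysis"
begin

definition tangent_cone :: "'a::real_normed_vector set \<Rightarrow> 'a \<Rightarrow> 'a set" where
  "tangent_cone S y = {w. \<exists>t wk. (\<forall>k. t k > 0) \<and> t \<longlonglongrightarrow> 0 \<and> wk \<longlonglongrightarrow> w
                              \<and> (\<forall>k. y + t k *\<^sub>R wk k \<in> S)}"

definition regular_normal_cone :: "'a::real_inner set \<Rightarrow> 'a \<Rightarrow> 'a set" where
  "regular_normal_cone D y = {v. y \<in> D \<and>
     (\<forall>\<epsilon>>0. \<exists>\<delta>>0. \<forall>y'\<in>D. norm (y' - y) < \<delta> \<longrightarrow> inner v (y' - y) \<le> \<epsilon> * norm (y' - y))}"

definition limiting_normal_cone :: "'a::real_inner set \<Rightarrow> 'a \<Rightarrow> 'a set" where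
  "limiting_normal_cone D y = {v. \<exists>yk vk. yk \<longlonglongrightarrow> y \<and> vk \<longlonglongrightarrow> v
      \<and> (\<forall>k. vk k \<in> regular_normal_cone D (yk k))}"

definition dir_limiting_normal_cone :: "'a::real_inner set \<Rightarrow> 'a \<Rightarrow> 'a \<Rightarrow> 'a set" where
  "dir_limiting_normal_cone D y w = {v. \<exists>t wk vk. (\<forall>k. t k > 0) \<and> t \<longlonglongrightarrow> 0
      \<and> wk \<longlonglongrightarrow> w \<and> vk \<longlonglongrightarrow> v
      \<and> (\<forall>k. vk k \<in> regular_normal_cone D (y + t k *\<^sub>R wk k))}"

definition gph_normal_cone :: "'a::real_inner set \<Rightarrow> ('a \<times> 'a) set" where
  "gph_normal_cone D = {(y, v). v \<in> limiting_normal_cone D y}"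

definition graph_deriv_normal_cone :: "'a::real_inner set \<Rightarrow> 'a \<Rightarrow> 'a \<Rightarrow> 'a \<Rightarrow> 'a set" where
  "graph_deriv_normal_cone D y v q = {z. (q, z) \<in> tangent_cone (gph_normal_cone D) (y, v)}"

definition graph_subderiv_normal_cone :: "'a::real_inner set \<Rightarrow> 'a \<Rightarrow> 'a \<Rightarrow> 'a \<Rightarrow> 'a set" where
  "graph_subderiv_normal_cone D y v q = {w. norm w = 1 \<and>
     (\<exists>qk wk t \<tau>. qk \<longlonglongrightarrow> q \<and> wk \<longlonglongrightarrow> w \<and> (\<forall>k. t k > 0) \<and> t \<longlonglongrightarrow> 0
        \<and> (\<forall>k. \<tau> k > 0) \<and> \<tau> \<longlonglongrightarrow> 0 \<and> filterlim (\<lambda>k. \<tau> k / t k) at_top sequentially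
        \<and> (\<forall>k. (y + t k *\<^sub>R qk k, v + \<tau> k *\<^sub>R wk k) \<in> gph_normal_cone D))}"

end

theory Submission
  imports Defs
begin

text \<open>Under FOSCMS the multiplier \<open>y\<^sup>*\<close> in each of the three conditions is forced to vanish,
  so every graphical (sub)derivative occurring there is taken at a zero multiplier. Since the
  normal cones are cones, a tangent \<open>(q, z\<^sup>*)\<close> to \<open>gph N\<^sub>D\<close> at \<open>(y, 0)\<close> comes from
  limiting normals \<open>z\<^sub>k\<^sup>*\<close> at \<open>y + t\<^sub>k q\<^sub>k\<close>, and a diagonal choice of nearby regular normals
  places \<open>z\<^sup>*\<close> in the directional limiting normal cone \<open>N\<^sub>D(y; q)\<close>. FOSCMS applied once
  more then yields all claims.\<close>

lemma regular_normal_cone_scaleR: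
  assumes c: "c > 0" and v: "v \<in> regular_normal_cone D y"
  shows "c *\<^sub>R v \<in> regular_normal_cone D y"
  unfolding regular_normal_cone_def
proof safe
  show "y \<in> D" using v by (simp add: regular_normal_cone_def)
next
  fix e :: real assume "e > 0"
  with c have "e / c > 0" by simp
  then obtain d where d: "d > 0"
      "\<forall>y'\<in>D. norm (y' - y) < d \<longrightarrow> inner v (y' - y) \<le> (e / c) * norm (y' - y)"
    using v unfolding regular_normal_cone_def by blast
  have "inner (c *\<^sub>R v) (y' - y) \<le> e * norm (y' - y)"
    if "y' \<in> D" "norm (y' - y) < d" for y'
    using mult_left_mono[OF d(2)[rule_format, OF that], of c] c by simp
  with d(1) show "\<exists>d>0. \<forall>y'\<in>D. norm (y' - y) < d \<longrightarrow> inner (c *\<^sub>R v) (y' - y) \<le> e * norm (y' - y)"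
    by blast
qed

lemma limiting_normal_cone_scaleR:
  assumes c: "c > 0" and v: "v \<in> limiting_normal_cone D y"
  shows "c *\<^sub>R v \<in> limiting_normal_cone D y"
proof -
  obtain yk vk where "yk \<longlonglongrightarrow> y" "vk \<longlonglongrightarrow> v" "\<forall>k. vk k \<in> regular_normal_cone D (yk k)"
    using v unfolding limiting_normal_cone_def by blast
  moreover from \<open>vk \<longlonglongrightarrow> v\<close> have "(\<lambda>k. c *\<^sub>R vk k) \<longlonglongrightarrow> c *\<^sub>R v" by (intro tendsto_intros)
  ultimately show ?thesis
    unfolding limiting_normal_cone_def using regular_normal_cone_scaleR[OF c] by blast
qed

lemma limiting_normal_cone_approx_regular:
  assumes v: "v \<in> limiting_normal_cone D y" and "e > 0" "e' > 0"
  obtains a b where "norm (a - y) < e" "norm (b - v) < e'" "b \<in> regular_normal_cone D a"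
proof -
  obtain yk vk where h: "yk \<longlonglongrightarrow> y" "vk \<longlonglongrightarrow> v" "\<forall>k. vk k \<in> regular_normal_cone D (yk k)"
    using v unfolding limiting_normal_cone_def by blast
  have "eventually (\<lambda>k. dist (yk k) y < e \<and> dist (vk k) v < e') sequentially"
    using tendstoD[OF h(1) \<open>e > 0\<close>] tendstoD[OF h(2) \<open>e' > 0\<close>] by (rule eventually_conj)
  then obtain k where "dist (yk k) y < e" "dist (vk k) v < e'"
    by (auto simp: eventually_sequentially)
  with h(3) show ?thesis using that by (metis dist_norm)
qed

lemma LIMSEQ_close_inverse_Suc:
  fixes x y :: "nat \<Rightarrow> 'a::real_normed_vector"
  assumes "y \<longlonglongrightarrow> l" and "\<And>k. norm (x k - y k) \<le> inverse (real (Suc k))"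
  shows "x \<longlonglongrightarrow> l"
proof -
  have "(\<lambda>k. x k - y k) \<longlonglongrightarrow> 0"
    by (rule Lim_null_comparison[OF _ LIMSEQ_inverse_real_of_nat]) (use assms(2) in auto)
  then show ?thesis using Lim_transform[OF assms(1)] by blast
qed

text \<open>The regular normals approximating the \<open>k\<close>-th limiting normal are taken within \<open>t\<^sub>k / (k+1)\<close> of the base
  point, so that the rescaled directions still converge to \<open>w\<close>.\<close>

lemma dir_limiting_normal_coneI_limiting:
  assumes tpos: "\<And>k. t k > 0" and t0: "t \<longlonglongrightarrow> 0" and q: "q \<longlonglongrightarrow> w" and zv: "z \<longlonglongrightarrow> v"
    and N: "\<And>k. z k \<in> limiting_normal_cone D (y + t k *\<^sub>R q k)"
  shows "v \<in> dir_limiting_normal_cone D y w"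
proof -
  have "\<exists>a b. norm (a - (y + t k *\<^sub>R q k)) < t k * inverse (real (Suc k))
        \<and> norm (b - z k) < inverse (real (Suc k)) \<and> b \<in> regular_normal_cone D a" for k
    using limiting_normal_cone_approx_regular[OF N[of k]] tpos[of k] by (metis mult_pos_pos
      inverse_positive_iff_positive of_nat_0_less_iff zero_less_Suc)
  then obtain A B where A: "\<And>k. norm (A k - (y + t k *\<^sub>R q k)) < t k * inverse (real (Suc k))"
    and B: "\<And>k. norm (B k - z k) < inverse (real (Suc k))"
    and AB: "\<And>k. B k \<in> regular_normal_cone D (A k)"
    by metis
  define r where "r k = inverse (t k) *\<^sub>R (A k - y)" for k
  have A_eq: "A k = y + t k *\<^sub>R r k" for k
    using tpos[of k] by (simp add: r_def)
  have r_close: "norm (r k - q k) \<le> inverse (real (Suc k))" for k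
  proof -
    have "norm (r k - q k) = inverse (t k) * norm (A k - (y + t k *\<^sub>R q k))"
      using tpos[of k] by (simp add: A_eq flip: scaleR_diff_right)
    also have "\<dots> \<le> inverse (t k) * (t k * inverse (real (Suc k)))"
      using A[of k] tpos[of k] by (intro mult_left_mono) auto
    also have "\<dots> = inverse (real (Suc k))" using tpos[of k] by simp
    finally show ?thesis .
  qed
  have "r \<longlonglongrightarrow> w" using q r_close by (rule LIMSEQ_close_inverse_Suc)
  moreover have "B \<longlonglongrightarrow> v" using zv by (rule LIMSEQ_close_inverse_Suc) (rule less_imp_le[OF B])
  moreover have "\<forall>k. B k \<in> regular_normal_cone D (y + t k *\<^sub>R r k)"
    using AB by (simp flip: A_eq)
  ultimately show ?thesis
    unfolding dir_limiting_normal_cone_def using tpos t0 by blast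
qed

lemma dir_limiting_normal_cone_subset_limiting:
  assumes "v \<in> dir_limiting_normal_cone D y w"
  shows "v \<in> limiting_normal_cone D y"
proof -
  obtain t wk vk where h: "\<forall>k. t k > 0" "t \<longlonglongrightarrow> 0" "wk \<longlonglongrightarrow> w" "vk \<longlonglongrightarrow> v"
    "\<forall>k. vk k \<in> regular_normal_cone D (y + t k *\<^sub>R wk k)"
    using assms unfolding dir_limiting_normal_cone_def by blast
  have "(\<lambda>k. y + t k *\<^sub>R wk k) \<longlonglongrightarrow> y + 0 *\<^sub>R w" using h by (intro tendsto_intros)
  then show ?thesis unfolding limiting_normal_cone_def using h by auto
qed

lemma graph_deriv_normal_cone_zero_subset_dir:
  assumes "z \<in> graph_deriv_normal_cone D y 0 q"
  shows "z \<in> dir_limiting_normal_cone D y q"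
proof -
  obtain t p where h: "\<forall>k. t k > 0" "t \<longlonglongrightarrow> 0" "p \<longlonglongrightarrow> (q, z)"
      "\<forall>k. (y, 0) + t k *\<^sub>R p k \<in> gph_normal_cone D"
    using assms unfolding graph_deriv_normal_cone_def tangent_cone_def by blast
  have "snd (p k) \<in> limiting_normal_cone D (y + t k *\<^sub>R fst (p k))" for k
  proof -
    have "t k *\<^sub>R snd (p k) \<in> limiting_normal_cone D (y + t k *\<^sub>R fst (p k))"
      using h(4)[rule_format, of k] by (cases "p k") (simp add: gph_normal_cone_def)
    from limiting_normal_cone_scaleR[OF _ this, of "inverse (t k)"] h(1)[rule_format, of k] show ?thesis
      by simp
  qed
  with h(1,2) tendsto_fst[OF h(3)] tendsto_snd[OF h(3)] show ?thesis
    by (intro dir_limiting_normal_coneI_limiting[of t "\<lambda>k. fst (p k)" q "\<lambda>k. snd (p k)"]) auto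
qed

lemma graph_subderiv_normal_cone_zero_subset_dir:
  assumes "z \<in> graph_subderiv_normal_cone D y 0 q" and c: "c > 0"
  shows "z \<in> dir_limiting_normal_cone D y (c *\<^sub>R q)"
proof -
  obtain qk zk t \<tau> where h: "qk \<longlonglongrightarrow> q" "zk \<longlonglongrightarrow> z" "\<forall>k. t k > 0" "t \<longlonglongrightarrow> 0"
      "\<forall>k. \<tau> k > 0" "\<forall>k. (y + t k *\<^sub>R qk k, 0 + \<tau> k *\<^sub>R zk k) \<in> gph_normal_cone D"
    using assms(1) unfolding graph_subderiv_normal_cone_def by blast
  have "zk k \<in> limiting_normal_cone D (y + (t k / c) *\<^sub>R (c *\<^sub>R qk k))" for k
  proof -
    have "\<tau> k *\<^sub>R zk k \<in> limiting_normal_cone D (y + t k *\<^sub>R qk k)"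
      using h(6)[rule_format, of k] by (simp add: gph_normal_cone_def)
    from limiting_normal_cone_scaleR[OF _ this, of "inverse (\<tau> k)"] h(5)[rule_format, of k] c show ?thesis
      by simp
  qed
  moreover have "(\<lambda>k. c *\<^sub>R qk k) \<longlonglongrightarrow> c *\<^sub>R q" using h(1) by (intro tendsto_intros)
  moreover have "(\<lambda>k. t k / c) \<longlonglongrightarrow> 0" using tendsto_divide_zero[OF h(4)] .
  ultimately show ?thesis
    using h(2,3) c by (intro dir_limiting_normal_coneI_limiting[of "\<lambda>k. t k / c"]) auto
qed

lemma adjoint_blinfun_zero:
  "adjoint (blinfun_apply (f :: 'a::euclidean_space \<Rightarrow>\<^sub>L 'b::euclidean_space)) 0 = 0"
  by (rule linear_0[OF adjoint_linear[OF bounded_linear.linear[OF blinfun.bounded_linear_right]]])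

theorem mainTheorem14:
  fixes g :: "'a::euclidean_space \<Rightarrow> 'b::euclidean_space"
    and g' :: "'a \<Rightarrow> ('a \<Rightarrow>\<^sub>L 'b)"
    and g'' :: "'a \<Rightarrow> ('a \<Rightarrow>\<^sub>L ('a \<Rightarrow>\<^sub>L 'b))"
    and D :: "'b set" and xb u :: 'a
  assumes dg: "\<And>x. (g has_derivative blinfun_apply (g' x)) (at x)"
    and d2g: "\<And>x. (g' has_derivative blinfun_apply (g'' x)) (at x)"
    and cont2: "continuous_on UNIV g''"
    and Dclosed: "closed D"
    and feas: "g xb \<in> D"
    and unit: "norm u = 1"
    and tang: "blinfun_apply (g' xb) u \<in> tangent_cone D (g xb)"
    and foscms: "\<And>ys. ys \<in> dir_limiting_normal_cone D (g xb) (blinfun_apply (g' xb) u)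
                  \<Longrightarrow> adjoint (blinfun_apply (g' xb)) ys = 0 \<Longrightarrow> ys = 0"
  shows
   "(\<forall>ys zs. adjoint (blinfun_apply (g' xb)) ys = 0
        \<and> adjoint (blinfun_apply (blinfun_apply (g'' xb) u)) ys
            + adjoint (blinfun_apply (g' xb)) zs = 0
        \<and> ys \<in> dir_limiting_normal_cone D (g xb) (blinfun_apply (g' xb) u)
        \<and> zs \<in> graph_deriv_normal_cone D (g xb) ys (blinfun_apply (g' xb) u)
        \<longrightarrow> ys = 0)
  \<and> (blinfun_apply (g' xb) u = 0 \<longrightarrow>
       (\<forall>ys zh. adjoint (blinfun_apply (g' xb)) ys = 0
        \<and> adjoint (blinfun_apply (g' xb)) zh = 0
        \<and> ys \<in> dir_limiting_normal_cone D (g xb) (blinfun_apply (g' xb) u)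
        \<and> zh \<in> graph_deriv_normal_cone D (g xb) ys 0
        \<longrightarrow> zh = 0))
  \<and> (blinfun_apply (g' xb) u \<noteq> 0 \<longrightarrow>
       (\<forall>ys zh. adjoint (blinfun_apply (g' xb)) ys = 0
        \<and> adjoint (blinfun_apply (g' xb)) zh = 0
        \<and> ys \<in> dir_limiting_normal_cone D (g xb) (blinfun_apply (g' xb) u)
        \<longrightarrow> zh \<notin> graph_subderiv_normal_cone D (g xb) ys
               (blinfun_apply (g' xb) u /\<^sub>R norm (blinfun_apply (g' xb) u))))
  \<and> (\<forall>xs ys zs. xs = adjoint (blinfun_apply (blinfun_apply (g'' xb) u)) ys
                      + adjoint (blinfun_apply (g' xb)) zs
        \<and> ys \<in> dir_limiting_normal_cone D (g xb) (blinfun_apply (g' xb) u)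
        \<and> adjoint (blinfun_apply (g' xb)) ys = 0
        \<and> zs \<in> graph_deriv_normal_cone D (g xb) ys (blinfun_apply (g' xb) u)
        \<longrightarrow> (\<exists>lam. lam \<in> dir_limiting_normal_cone D (g xb) (blinfun_apply (g' xb) u)
                \<and> lam \<in> limiting_normal_cone D (g xb)
                \<and> xs = adjoint (blinfun_apply (g' xb)) lam))"
proof (intro conjI allI impI; elim conjE)
  fix ys zs
  assume "adjoint (blinfun_apply (g' xb)) ys = 0"
    and "ys \<in> dir_limiting_normal_cone D (g xb) (blinfun_apply (g' xb) u)"
  then show "ys = 0" by (rule foscms[rotated])
next
  fix ys zh
  assume "blinfun_apply (g' xb) u = 0" and "adjoint (blinfun_apply (g' xb)) zh = 0"
    and "adjoint (blinfun_apply (g' xb)) ys = 0"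
    and "ys \<in> dir_limiting_normal_cone D (g xb) (blinfun_apply (g' xb) u)"
    and "zh \<in> graph_deriv_normal_cone D (g xb) ys 0"
  then show "zh = 0"
    using foscms graph_deriv_normal_cone_zero_subset_dir by metis
next
  fix ys zh
  let ?w = "blinfun_apply (g' xb) u"
  assume nz: "?w \<noteq> 0" and zh_ker: "adjoint (blinfun_apply (g' xb)) zh = 0"
    and "adjoint (blinfun_apply (g' xb)) ys = 0"
    and "ys \<in> dir_limiting_normal_cone D (g xb) ?w"
  then have "ys = 0" using foscms by blast
  show "zh \<notin> graph_subderiv_normal_cone D (g xb) ys (?w /\<^sub>R norm ?w)"
  proof
    assume zh: "zh \<in> graph_subderiv_normal_cone D (g xb) ys (?w /\<^sub>R norm ?w)"
    with \<open>ys = 0\<close> nz have "zh \<in> dir_limiting_normal_cone D (g xb) (norm ?w *\<^sub>R (?w /\<^sub>R norm ?w))"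
      by (intro graph_subderiv_normal_cone_zero_subset_dir) auto
    with nz have "zh \<in> dir_limiting_normal_cone D (g xb) ?w" by simp
    then have "zh = 0" using zh_ker by (rule foscms)
    with zh show False by (simp add: graph_subderiv_normal_cone_def)
  qed
next
  fix xs ys zs
  assume xs: "xs = adjoint (blinfun_apply (blinfun_apply (g'' xb) u)) ys
                 + adjoint (blinfun_apply (g' xb)) zs"
    and "ys \<in> dir_limiting_normal_cone D (g xb) (blinfun_apply (g' xb) u)"
    and "adjoint (blinfun_apply (g' xb)) ys = 0"
    and zs: "zs \<in> graph_deriv_normal_cone D (g xb) ys (blinfun_apply (g' xb) u)"
  then have "ys = 0" using foscms by blast
  with xs zs show "\<exists>lam. lam \<in> dir_limiting_normal_cone D (g xb) (blinfun_apply (g' xb) u)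
      \<and> lam \<in> limiting_normal_cone D (g xb) \<and> xs = adjoint (blinfun_apply (g' xb)) lam"
    using graph_deriv_normal_cone_zero_subset_dir dir_limiting_normal_cone_subset_limiting
      adjoint_blinfun_zero by fastforce
qed

end
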